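(* Let $k_0\ge 0$ and $c_0\in L^1([-\tau,0);\mathbb{R}_+)$. Let $c^m\in L^1_{loc}([0,\infty);\mathbb{R}_+)$ be the unique solution of $$c^m(t)=\varepsilon\int_{t-\tau}^{t}\widetilde{c}^{\,m}(u)\,e^{\eta(u-t)}\,du,\qquad t\ge 0,$$ where $\widetilde c^{\,m}$ is the concatenation of $c_0$ and $c^m$. Then every control $c\in L^1_{loc}([0,\infty);\mathbb{R}_+)$ satisfying the habit constraint $c(t)\ge h(t)$ for almost every $t\ge0$ satisfies $c(t)\ge c^m(t)$ for almost every $t\ge 0$, and its associated capital path satisfies, for every $t\ge 0$, $$k(t)\le k^M(t):=e^{(A-\delta)t}\Big[k_0-\int_0^t c^m(u)e^{-(A-\delta)u}\,du\Big].$$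
   Context: Fixed parameters: $A>0$, $\delta>0$, $\rho>0$, $\gamma>0$ with $\gamma\ne1$, $\varepsilon>0$ (habit intensity), $\eta>0$ (habit persistence), $\tau>0$ (memory). Given an initial past consumption $c_0\in L^1([-\tau,0);\mathbb{R}_+)$ and a control $c\in L^1_{loc}([0,\infty);\mathbb{R}_+)$, the concatenation is $\widetilde c(s)=c_0(s)$ for $s\in[-\tau,0)$ and $\widetilde c(s)=c(s)$ for $s\ge0$. The (internal) habit is $h(t)=\varepsilon\int_{t-\tau}^{t}\widetilde c(u)e^{\eta(u-t)}du$ for $t\ge0$. Given $k_0$, the capital path associated to $c$ is the solution of $\dot k(t)=(A-\delta)k(t)-c(t)$, $k(0)=k_0$, i.e. $k(t)=k_0e^{(A-\delta)t}-\int_0^te^{(A-\delta)(t-u)}c(u)\,du$. *)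

theory Defs
  imports "HOL-Analysis.Analysis"
begin

definition concat_cons :: "(real \<Rightarrow> real) \<Rightarrow> (real \<Rightarrow> real) \<Rightarrow> real \<Rightarrow> real" where
  "concat_cons c0 c s = (if s < 0 then c0 s else c s)"

definition habit :: "real \<Rightarrow> real \<Rightarrow> real \<Rightarrow> (real \<Rightarrow> real) \<Rightarrow> (real \<Rightarrow> real) \<Rightarrow> real \<Rightarrow> real" where
  "habit \<epsilon> \<eta> \<tau> c0 c t =
     \<epsilon> * (LINT u:{t - \<tau>..t}|lborel. concat_cons c0 c u * exp (\<eta> * (u - t)))"

definition capital :: "real \<Rightarrow> real \<Rightarrow> real \<Rightarrow> (real \<Rightarrow> real) \<Rightarrow> real \<Rightarrow> real" where
  "capital A \<delta> k0 c t =
     k0 * exp ((A - \<delta>) * t) - (LINT u:{0..t}|lborel. exp ((A - \<delta>) * (t - u)) * c u)"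

definition L1loc_nonneg :: "(real \<Rightarrow> real) \<Rightarrow> bool" where
  "L1loc_nonneg c \<longleftrightarrow> (\<forall>T\<ge>0. set_integrable lborel {0..T} c)
                       \<and> (AE t in lborel. t \<ge> 0 \<longrightarrow> c t \<ge> 0)"

end

theory Submission
  imports Defs
begin

text \<open>If c satisfies the habit constraint and cm is a subsolution of the habit equation, the
  past consumption c0 cancels in the difference of the two habits and the kernel exp(\<eta>(u - t))
  is at most 1, so the shortfall g = max 0 (cm - c) satisfies g(t) \<le> \<epsilon> \<integral>[0,t] g a.e.
  If g already vanishes on [0,s], integrating this over [0,T] gives
  \<integral>[0,T] g \<le> \<epsilon>(T - s) \<integral>[0,T] g, so g = 0 spreads over intervals of length 1/(\<epsilon> + 1).
  The capital bound follows because k(t) = exp((A - \<delta>)t) (k0 - \<integral>[0,t] c(u) exp(-(A - \<delta>)u) du)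
  decreases in c.\<close>

lemma set_integrable_mult_bounded:
  fixes f g :: "'a \<Rightarrow> real"
  assumes f: "set_integrable M S f" and g: "g \<in> borel_measurable M"
    and bound: "\<And>x. x \<in> S \<Longrightarrow> \<bar>g x\<bar> \<le> B"
  shows "set_integrable M S (\<lambda>x. f x * g x)"
proof (rule set_integrable_bound)
  show "set_integrable M S (\<lambda>x. B * f x)"
    using f by simp
  have "(\<lambda>x. indicator S x *\<^sub>R f x) \<in> borel_measurable M"
    using f by (auto simp: set_integrable_def)
  then have "(\<lambda>x. indicator S x * f x * g x) \<in> borel_measurable M"
    using g by simp
  then show "set_borel_measurable M S (\<lambda>x. f x * g x)"
    by (simp add: set_borel_measurable_def mult.assoc)
  show "AE x in M. x \<in> S \<longrightarrow> norm (f x * g x) \<le> norm (B * f x)"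
  proof (intro AE_I2 impI)
    fix x assume "x \<in> S"
    then have "\<bar>g x\<bar> \<le> \<bar>B\<bar>"
      using bound by fastforce
    then have "\<bar>f x\<bar> * \<bar>g x\<bar> \<le> \<bar>f x\<bar> * \<bar>B\<bar>"
      by (rule mult_left_mono) simp
    then show "norm (f x * g x) \<le> norm (B * f x)"
      by (simp add: abs_mult mult.commute)
  qed
qed

lemma set_integrable_pos_part_diff:
  fixes f g :: "'a \<Rightarrow> real"
  assumes "set_integrable M S f" "set_integrable M S g"
  shows "set_integrable M S (\<lambda>x. max 0 (f x - g x))"
proof -
  have "set_integrable M S (\<lambda>x. ((f x - g x) + \<bar>f x - g x\<bar>) / 2)"
    using assms by (intro set_integrable_divide set_integral_add set_integrable_abs set_integral_diff)
  then show ?thesis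
    by (rule back_subst[of "set_integrable M S"]) (auto simp: max_def)
qed

lemma set_integral_mono_subset:
  fixes f :: "'a \<Rightarrow> real"
  assumes f: "set_integrable M B f" and A: "A \<in> sets M" "A \<subseteq> B"
    and nonneg: "\<And>x. x \<in> B \<Longrightarrow> 0 \<le> f x"
  shows "(LINT x:A|M. f x) \<le> (LINT x:B|M. f x)"
  unfolding set_lebesgue_integral_def
proof (rule integral_mono)
  show "integrable M (\<lambda>x. indicat_real A x *\<^sub>R f x)"
    using set_integrable_subset[OF f A] by (simp add: set_integrable_def)
  show "integrable M (\<lambda>x. indicat_real B x *\<^sub>R f x)"
    using f by (simp add: set_integrable_def)
  show "indicat_real A x *\<^sub>R f x \<le> indicat_real B x *\<^sub>R f x" for x
    using A nonneg by (auto simp: indicator_def)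
qed

lemma set_integrable_concat_cons:
  assumes "t \<ge> 0" "set_integrable lborel {-\<tau>..<0} c0" "set_integrable lborel {0..t} c"
  shows "set_integrable lborel {t-\<tau>..t} (concat_cons c0 c)"
proof -
  have "set_integrable lborel ({t-\<tau>..t} \<inter> {..<0}) c0"
    by (rule set_integrable_subset[OF assms(2)]) (use assms(1) in auto)
  moreover have "set_integrable lborel ({t-\<tau>..t} \<inter> {0..}) c"
    by (rule set_integrable_subset[OF assms(3)]) auto
  ultimately have "integrable lborel (\<lambda>x. indicator ({t-\<tau>..t} \<inter> {..<0}) x * c0 x
                                     + indicator ({t-\<tau>..t} \<inter> {0..}) x * c x)"
    by (simp add: set_integrable_def)
  then show ?thesis
    unfolding set_integrable_def
    by (rule back_subst[of "integrable lborel"]) (auto simp: concat_cons_def indicator_def)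
qed

lemma set_integrable_habit_integrand:
  assumes "t \<ge> 0" "\<eta> \<ge> 0" "set_integrable lborel {-\<tau>..<0} c0" "set_integrable lborel {0..t} c"
  shows "set_integrable lborel {t-\<tau>..t} (\<lambda>u. concat_cons c0 c u * exp (\<eta> * (u - t)))"
proof (rule set_integrable_mult_bounded[OF set_integrable_concat_cons[OF assms(1,3,4)]])
  fix u assume "u \<in> {t-\<tau>..t}"
  then have "\<eta> * (u - t) \<le> 0"
    using assms(2) by (simp add: mult_nonneg_nonpos)
  then show "\<bar>exp (\<eta> * (u - t))\<bar> \<le> 1"
    by simp
qed simp

lemma habit_diff_le:
  assumes "t \<ge> 0" "\<eta> \<ge> 0" "\<epsilon> \<ge> 0" "set_integrable lborel {-\<tau>..<0} c0"
    and c: "set_integrable lborel {0..t} c" and c': "set_integrable lborel {0..t} c'"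
  shows "habit \<epsilon> \<eta> \<tau> c0 c' t - habit \<epsilon> \<eta> \<tau> c0 c t
           \<le> \<epsilon> * (LINT u:{0..t}|lborel. max 0 (c' u - c u))"
proof -
  define F where "F = (\<lambda>c u. indicator {t-\<tau>..t} u * (concat_cons c0 c u * exp (\<eta> * (u - t))))"
  have F_int: "integrable lborel (F c)" if "set_integrable lborel {0..t} c" for c
    using set_integrable_habit_integrand[OF assms(1,2,4) that]
    by (simp add: F_def set_integrable_def)
  have pos_part_int: "integrable lborel (\<lambda>u. indicator {0..t} u * max 0 (c' u - c u))"
    using set_integrable_pos_part_diff[OF c' c] by (simp add: set_integrable_def)
  have pointwise: "F c' u - F c u \<le> indicator {0..t} u * max 0 (c' u - c u)" for u
  proof (cases "0 \<le> u \<and> u \<in> {t-\<tau>..t}")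
    case True
    then have "exp (\<eta> * (u - t)) \<le> 1"
      using assms(2) by (simp add: mult_nonneg_nonpos)
    then have "(c' u - c u) * exp (\<eta> * (u - t)) \<le> max 0 (c' u - c u) * exp (\<eta> * (u - t))"
      by (intro mult_right_mono) auto
    also have "\<dots> \<le> max 0 (c' u - c u)"
      using \<open>exp (\<eta> * (u - t)) \<le> 1\<close> by (intro mult_left_le) auto
    finally show ?thesis
      using True by (simp add: F_def concat_cons_def algebra_simps)
  qed (auto simp: F_def concat_cons_def)
  have "habit \<epsilon> \<eta> \<tau> c0 c' t - habit \<epsilon> \<eta> \<tau> c0 c t
          = \<epsilon> * (integral\<^sup>L lborel (F c') - integral\<^sup>L lborel (F c))"
    by (simp add: habit_def set_lebesgue_integral_def F_def right_diff_distrib)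
  also have "\<dots> = \<epsilon> * integral\<^sup>L lborel (\<lambda>u. F c' u - F c u)"
    using F_int[OF c] F_int[OF c'] by simp
  also have "\<dots> \<le> \<epsilon> * integral\<^sup>L lborel (\<lambda>u. indicator {0..t} u * max 0 (c' u - c u))"
    using F_int[OF c] F_int[OF c'] pos_part_int pointwise assms(3)
    by (intro mult_left_mono integral_mono) auto
  finally show ?thesis
    by (simp add: set_lebesgue_integral_def)
qed

lemma capital_eq_discounted:
  "capital A \<delta> k0 c t = exp ((A - \<delta>) * t) * (k0 - (LINT u:{0..t}|lborel. c u * exp (- (A - \<delta>) * u)))"
proof -
  have "(\<lambda>u. exp ((A - \<delta>) * (t - u)) * c u) = (\<lambda>u. exp ((A - \<delta>) * t) * (c u * exp (- (A - \<delta>) * u)))"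
    by (simp add: fun_eq_iff algebra_simps flip: exp_add)
  then show ?thesis
    unfolding capital_def by (simp add: right_diff_distrib mult.commute)
qed

lemma discounted_integral_mono:
  fixes c c' :: "real \<Rightarrow> real"
  assumes "set_integrable lborel {0..t} c" "set_integrable lborel {0..t} c'"
    and le: "AE u in lborel. u \<ge> 0 \<longrightarrow> c' u \<le> c u"
  shows "(LINT u:{0..t}|lborel. c' u * exp (b * u)) \<le> (LINT u:{0..t}|lborel. c u * exp (b * u))"
proof (rule set_integral_mono_AE)
  have bound: "\<bar>exp (b * u)\<bar> \<le> exp (\<bar>b\<bar> * t)" if "u \<in> {0..t}" for u
  proof -
    have "b * u \<le> \<bar>b\<bar> * u"
      using that by (intro mult_right_mono) auto
    also have "\<dots> \<le> \<bar>b\<bar> * t"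
      using that by (intro mult_left_mono) auto
    finally show ?thesis
      by simp
  qed
  show "set_integrable lborel {0..t} (\<lambda>u. c' u * exp (b * u))"
       "set_integrable lborel {0..t} (\<lambda>u. c u * exp (b * u))"
    using assms(1,2) by (auto intro!: set_integrable_mult_bounded bound)
  show "AE u\<in>{0..t} in lborel. c' u * exp (b * u) \<le> c u * exp (b * u)"
    using le by eventually_elim auto
qed

lemma gronwall_AE_zero_step:
  fixes g :: "real \<Rightarrow> real"
  assumes "\<epsilon> \<ge> 0" "0 \<le> s" "s \<le> T" and contract: "\<epsilon> * (T - s) < 1"
    and g_int: "set_integrable lborel {0..T} g" and g_nonneg: "\<And>t. 0 \<le> g t"
    and g_le: "AE t in lborel. 0 \<le> t \<and> t \<le> T \<longrightarrow> g t \<le> \<epsilon> * (LINT u:{0..t}|lborel. g u)"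
    and g_zero: "AE t in lborel. 0 \<le> t \<and> t \<le> s \<longrightarrow> g t = 0"
  shows "AE t in lborel. 0 \<le> t \<and> t \<le> T \<longrightarrow> g t = 0"
proof -
  define M where "M = (LINT u:{0..T}|lborel. g u)"
  have int: "integrable lborel (\<lambda>u. indicator {0..T} u * g u)"
    using g_int by (simp add: set_integrable_def)
  have M_nonneg: "0 \<le> M"
    unfolding M_def set_lebesgue_integral_def by (rule integral_nonneg_AE) (simp add: g_nonneg)
  have "AE t in lborel. indicator {0..T} t * g t \<le> \<epsilon> * M * indicator {s<..T} t"
    using g_le g_zero
  proof eventually_elim
    case (elim t)
    show ?case
    proof (cases "s < t \<and> t \<le> T")
      case True
      have "g t \<le> \<epsilon> * (LINT u:{0..t}|lborel. g u)"
        using elim(1) True assms(2) by simp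
      also have "\<dots> \<le> \<epsilon> * M"
        unfolding M_def using True assms(1,2) g_int g_nonneg
        by (intro mult_left_mono set_integral_mono_subset) auto
      finally show ?thesis
        using True assms(2) by simp
    qed (use elim(2) M_nonneg assms(1) in \<open>auto simp: indicator_def\<close>)
  qed
  moreover have "integrable lborel (\<lambda>t. \<epsilon> * M * indicator {s<..T} t)"
    using assms(3) by (simp add: integrable_indicator_iff emeasure_lborel_Ioc)
  ultimately have "M \<le> integral\<^sup>L lborel (\<lambda>t. \<epsilon> * M * indicator {s<..T} t)"
    unfolding M_def set_lebesgue_integral_def using int by (intro integral_mono_AE) simp_all
  also have "\<dots> = M * (\<epsilon> * (T - s))"
    using assms(3) by simp
  finally have M_le: "M \<le> M * (\<epsilon> * (T - s))" .
  have "M = 0"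
  proof (rule ccontr)
    assume "M \<noteq> 0"
    then have "M * (\<epsilon> * (T - s)) < M * 1"
      using M_nonneg contract by (intro mult_strict_left_mono) simp_all
    then show False
      using M_le by simp
  qed
  then have "AE t in lborel. indicator {0..T} t * g t = 0"
    using integral_nonneg_eq_0_iff_AE[OF int] g_nonneg by (simp add: M_def set_lebesgue_integral_def)
  then show ?thesis
    by eventually_elim (simp add: indicator_def)
qed

lemma gronwall_AE_zero:
  fixes g :: "real \<Rightarrow> real"
  assumes "\<epsilon> \<ge> 0" and g_int: "\<And>T. T \<ge> 0 \<Longrightarrow> set_integrable lborel {0..T} g"
    and g_nonneg: "\<And>t. 0 \<le> g t"
    and g_le: "AE t in lborel. 0 \<le> t \<longrightarrow> g t \<le> \<epsilon> * (LINT u:{0..t}|lborel. g u)"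
  shows "AE t in lborel. 0 \<le> t \<longrightarrow> g t = 0"
proof -
  define h where "h = 1 / (\<epsilon> + 1)"
  have h: "0 < h" "\<epsilon> * h < 1"
    using assms(1) by (simp_all add: h_def)
  have "AE t in lborel. 0 \<le> t \<and> t \<le> real n * h \<longrightarrow> g t = 0" for n
  proof (induction n)
    case 0
    show ?case
      using AE_lborel_singleton[of 0] by eventually_elim auto
  next
    case (Suc n)
    show ?case
    proof (rule gronwall_AE_zero_step[OF assms(1) _ _ _ g_int g_nonneg _ Suc.IH])
      show "\<epsilon> * (real (Suc n) * h - real n * h) < 1"
        using h by (simp add: algebra_simps)
      show "AE t in lborel. 0 \<le> t \<and> t \<le> real (Suc n) * h
              \<longrightarrow> g t \<le> \<epsilon> * (LINT u:{0..t}|lborel. g u)"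
        using g_le by eventually_elim auto
    qed (use h in auto)
  qed
  then have "AE t in lborel. \<forall>n. 0 \<le> t \<and> t \<le> real n * h \<longrightarrow> g t = 0"
    by (subst AE_all_countable) blast
  then show ?thesis
  proof eventually_elim
    case (elim t)
    obtain n where "t / h \<le> real n"
      using real_arch_simple by blast
    then have "t \<le> real n * h"
      using h by (simp add: divide_le_eq)
    then show ?case
      using elim by blast
  qed
qed

lemma habit_comparison:
  assumes "\<eta> \<ge> 0" "\<epsilon> \<ge> 0" "set_integrable lborel {-\<tau>..<0} c0"
    and c: "\<And>T. T \<ge> 0 \<Longrightarrow> set_integrable lborel {0..T} c"
    and c': "\<And>T. T \<ge> 0 \<Longrightarrow> set_integrable lborel {0..T} c'"
    and super: "AE t in lborel. t \<ge> 0 \<longrightarrow> habit \<epsilon> \<eta> \<tau> c0 c t \<le> c t"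
    and sub: "AE t in lborel. t \<ge> 0 \<longrightarrow> c' t \<le> habit \<epsilon> \<eta> \<tau> c0 c' t"
  shows "AE t in lborel. t \<ge> 0 \<longrightarrow> c' t \<le> c t"
proof -
  define g where "g u = max 0 (c' u - c u)" for u
  have "AE t in lborel. 0 \<le> t \<longrightarrow> g t \<le> \<epsilon> * (LINT u:{0..t}|lborel. g u)"
    using super sub
  proof eventually_elim
    case (elim t)
    show ?case
    proof
      assume "0 \<le> t"
      have "0 \<le> (LINT u:{0..t}|lborel. g u)"
        unfolding set_lebesgue_integral_def by (rule integral_nonneg_AE) (simp add: g_def)
      then show "g t \<le> \<epsilon> * (LINT u:{0..t}|lborel. g u)"
        using elim habit_diff_le[OF \<open>0 \<le> t\<close> assms(1-3) c c'] \<open>0 \<le> t\<close> assms(2)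
        by (fastforce simp: g_def)
    qed
  qed
  with assms(2) c c' have "AE t in lborel. 0 \<le> t \<longrightarrow> g t = 0"
    by (intro gronwall_AE_zero) (auto simp: g_def set_integrable_pos_part_diff)
  then show ?thesis
    by eventually_elim (simp add: g_def max_def split: if_splits)
qed

theorem mainTheorem1:
  fixes A \<delta> \<epsilon> \<eta> \<tau> k0 :: real
    and c0 cm :: "real \<Rightarrow> real"
  assumes "A > 0" and "\<delta> > 0" and "\<epsilon> > 0" and "\<eta> > 0" and "\<tau> > 0"
    and "k0 \<ge> 0"
    and "set_integrable lborel {-\<tau>..<0} c0"
    and "AE s in lborel. s \<in> {-\<tau>..<0} \<longrightarrow> c0 s \<ge> 0"
    and "L1loc_nonneg cm"
    and "AE t in lborel. t \<ge> 0 \<longrightarrow> cm t = habit \<epsilon> \<eta> \<tau> c0 cm t"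
  shows "\<forall>c. L1loc_nonneg c \<and> (AE t in lborel. t \<ge> 0 \<longrightarrow> c t \<ge> habit \<epsilon> \<eta> \<tau> c0 c t) \<longrightarrow>
           (AE t in lborel. t \<ge> 0 \<longrightarrow> c t \<ge> cm t)
         \<and> (\<forall>t\<ge>0. capital A \<delta> k0 c t
                 \<le> exp ((A - \<delta>) * t) * (k0 - (LINT u:{0..t}|lborel. cm u * exp (- (A - \<delta>) * u))))"
proof (intro allI impI conjI)
  fix c :: "real \<Rightarrow> real"
  assume c: "L1loc_nonneg c \<and> (AE t in lborel. t \<ge> 0 \<longrightarrow> c t \<ge> habit \<epsilon> \<eta> \<tau> c0 c t)"
  have c_int: "\<And>T. T \<ge> 0 \<Longrightarrow> set_integrable lborel {0..T} c"
    using c by (simp add: L1loc_nonneg_def)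
  have cm_int: "\<And>T. T \<ge> 0 \<Longrightarrow> set_integrable lborel {0..T} cm"
    using assms(9) by (simp add: L1loc_nonneg_def)
  have cm_sub: "AE t in lborel. t \<ge> 0 \<longrightarrow> cm t \<le> habit \<epsilon> \<eta> \<tau> c0 cm t"
    using assms(10) by eventually_elim simp
  show ge: "AE t in lborel. t \<ge> 0 \<longrightarrow> c t \<ge> cm t"
    using habit_comparison[OF _ _ assms(7) c_int cm_int _ cm_sub] assms(3,4) c by simp
  show "capital A \<delta> k0 c t
          \<le> exp ((A - \<delta>) * t) * (k0 - (LINT u:{0..t}|lborel. cm u * exp (- (A - \<delta>) * u)))"
    if "t \<ge> 0" for t
    unfolding capital_eq_discounted
    using discounted_integral_mono[OF c_int[OF that] cm_int[OF that] ge] by simp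
qed

end
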